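(* Let $(E,\le,u)$ be an ordered effect space whose positive cone $E_+$ is pointed. Let $A$ be a finite set of positive subunital linear maps $E\to E$ that is closed under composition (i.e. $S,T\in A$ implies $S\circ T\in A$). Then for each $T\in A$ there exists an integer $n\ge 1$ such that \[ T^n(d(T))=0, \] and moreover this $n$ can be chosen with $n\le |A|$.
   Context: An ordered effect space is a triple $(E,\le,u)$ where $E$ is a real vector space, $\le$ is a preorder (reflexive and transitive) on $E$ compatible with the vector space structure ($x\le y$ implies $x+z\le y+z$ and $\lambda x\le\lambda y$ for all $z\in E$, $\lambda\ge 0$), and $u\in E_+$ is a distinguished element called the unit, where $E_+=\{x\in E: x\ge 0\}$ is the positive cone. The cone is pointed if $E_+\cap(-E_+)=\{0\}$. A linear map $T:E\to E$ is positive if $T(E_+)\subseteq E_+$, subunital if $T(u)\le u$, unital if $T(u)=u$. The defect of a subunital map $T$ is $d(T)=u-T(u)$ (so $d(T)\ge 0$). $T^n$ denotes the $n$-fold composite. *)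

theory Defs
  imports Main "HOL.Real_Vector_Spaces"
begin

definition ordered_effect_space :: "('a::real_vector \<Rightarrow> 'a \<Rightarrow> bool) \<Rightarrow> 'a \<Rightarrow> bool" where
  "ordered_effect_space le u \<longleftrightarrow>
     (\<forall>x. le x x) \<and>
     (\<forall>x y z. le x y \<longrightarrow> le y z \<longrightarrow> le x z) \<and>
     (\<forall>x y z. le x y \<longrightarrow> le (x + z) (y + z)) \<and>
     (\<forall>x y (c::real). le x y \<longrightarrow> c \<ge> 0 \<longrightarrow> le (c *\<^sub>R x) (c *\<^sub>R y)) \<and>
     le 0 u"

definition positive_cone :: "('a::real_vector \<Rightarrow> 'a \<Rightarrow> bool) \<Rightarrow> 'a set" where
  "positive_cone le = {x. le 0 x}"

definition pointed_cone :: "('a::real_vector \<Rightarrow> 'a \<Rightarrow> bool) \<Rightarrow> bool" where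
  "pointed_cone le \<longleftrightarrow> positive_cone le \<inter> uminus ` positive_cone le = {0}"

definition positive_map :: "('a::real_vector \<Rightarrow> 'a \<Rightarrow> bool) \<Rightarrow> ('a \<Rightarrow> 'a) \<Rightarrow> bool" where
  "positive_map le T \<longleftrightarrow> T ` positive_cone le \<subseteq> positive_cone le"

definition subunital :: "('a::real_vector \<Rightarrow> 'a \<Rightarrow> bool) \<Rightarrow> 'a \<Rightarrow> ('a \<Rightarrow> 'a) \<Rightarrow> bool" where
  "subunital le u T \<longleftrightarrow> le (T u) u"

definition defect :: "'a::real_vector \<Rightarrow> ('a \<Rightarrow> 'a) \<Rightarrow> 'a" where
  "defect u T = u - T u"

end

theory Submission
  imports Defs
begin

text \<open>The orbit \<open>T u, T^2 u, \<dots>\<close> of the unit decreases, since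
  \<open>T^k u - T^(k+1) u = T^k (d T) \<ge> 0\<close>. As \<open>A\<close> is finite and contains every power of \<open>T\<close>,
  two of \<open>T^1, \<dots>, T^(|A|+1)\<close> coincide, say \<open>T^i = T^j\<close> with \<open>i < j\<close>.
  Then \<open>T^i u \<ge> T^(i+1) u \<ge> T^j u = T^i u\<close>, and pointedness of the cone (i.e. antisymmetry
  of the order) forces \<open>T^i (d T) = T^i u - T^(i+1) u = 0\<close>.\<close>

lemma linear_funpow:
  fixes T :: "'a::real_vector \<Rightarrow> 'a"
  shows "linear T \<Longrightarrow> linear (T ^^ k)"
  by (induction k) (auto simp only: funpow.simps intro: linear_compose linear_id)

lemma funpow_defect_eq:
  fixes T :: "'a::real_vector \<Rightarrow> 'a"
  shows "linear T \<Longrightarrow> (T ^^ k) (defect u T) = (T ^^ k) u - (T ^^ Suc k) u"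
  unfolding defect_def by (simp add: linear_diff linear_funpow funpow_swap1)

lemma positive_map_funpow: "positive_map le T \<Longrightarrow> positive_map le (T ^^ k)"
  unfolding positive_map_def by (induction k) (auto simp: image_comp)

lemma funpow_in_compose_closed:
  assumes "T \<in> A" and "\<And>S T. S \<in> A \<Longrightarrow> T \<in> A \<Longrightarrow> S \<circ> T \<in> A" and "1 \<le> k"
  shows "T ^^ k \<in> A"
  using \<open>1 \<le> k\<close>
proof (induction k rule: dec_induct)
  case base
  then show ?case using \<open>T \<in> A\<close> by simp
next
  case (step k)
  then show ?case using assms(1,2) by (simp only: funpow.simps(2))
qed

lemma funpow_repeats_in_finite_compose_closed:
  assumes "finite A" and "T \<in> A" and "\<And>S T. S \<in> A \<Longrightarrow> T \<in> A \<Longrightarrow> S \<circ> T \<in> A"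
  obtains i j where "1 \<le> i" "i < j" "j \<le> card A + 1" "T ^^ i = T ^^ j"
proof -
  have "(\<lambda>k. T ^^ k) ` {1..card A + 1} \<subseteq> A"
    using funpow_in_compose_closed[OF assms(2,3)] by auto
  then have "\<not> inj_on (\<lambda>k. T ^^ k) {1..card A + 1}"
    using card_inj_on_le[OF _ _ \<open>finite A\<close>] by fastforce
  then obtain i j where "i \<in> {1..card A + 1}" "j \<in> {1..card A + 1}" "i < j" "T ^^ i = T ^^ j"
    unfolding inj_on_def by (metis linorder_neqE_nat)
  then show thesis using that by auto
qed

context
  fixes le :: "'a::real_vector \<Rightarrow> 'a \<Rightarrow> bool" and u :: 'a
  assumes effect_space: "ordered_effect_space le u"
begin

lemma effect_le_refl: "le x x"
  and effect_le_trans: "le x y \<Longrightarrow> le y z \<Longrightarrow> le x z"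
  and effect_add_right_mono: "le x y \<Longrightarrow> le (x + z) (y + z)"
  using effect_space unfolding ordered_effect_space_def by blast+

lemma effect_le_iff_diff_nonneg: "le x y \<longleftrightarrow> le 0 (y - x)"
  using effect_add_right_mono[of x y "- x"] effect_add_right_mono[of 0 "y - x" x] by auto

lemma effect_le_antisym:
  assumes "pointed_cone le" and "le x y" and "le y x"
  shows "x = y"
proof -
  have "y - x \<in> positive_cone le \<inter> uminus ` positive_cone le"
    using assms(2,3) effect_le_iff_diff_nonneg unfolding positive_cone_def
    by (auto intro!: image_eqI[of _ uminus "x - y"])
  then show ?thesis
    using \<open>pointed_cone le\<close> unfolding pointed_cone_def by auto
qed

lemma positive_map_mono:
  assumes "linear T" and "positive_map le T" and "le x y"
  shows "le (T x) (T y)"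
proof -
  have "le 0 (T (y - x))"
    using assms effect_le_iff_diff_nonneg unfolding positive_map_def positive_cone_def by auto
  then show ?thesis
    using effect_le_iff_diff_nonneg linear_diff[OF \<open>linear T\<close>] by simp
qed

lemma funpow_unit_antimono:
  assumes "linear T" and "positive_map le T" and "subunital le u T" and "i \<le> j"
  shows "le ((T ^^ j) u) ((T ^^ i) u)"
  using \<open>i \<le> j\<close>
proof (induction j rule: dec_induct)
  case base
  then show ?case by (rule effect_le_refl)
next
  case (step j)
  have "le ((T ^^ j) (T u)) ((T ^^ j) u)"
    using assms(1-3) positive_map_mono linear_funpow positive_map_funpow
    unfolding subunital_def by blast
  then have "le ((T ^^ Suc j) u) ((T ^^ j) u)"
    by (simp add: funpow_swap1)
  then show ?case
    using step.IH effect_le_trans by blast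
qed

lemma funpow_defect_eq_0_if_funpow_eq:
  assumes "pointed_cone le" and "linear T" and "positive_map le T" and "subunital le u T"
    and "i < j" and "T ^^ i = T ^^ j"
  shows "(T ^^ i) (defect u T) = 0"
proof -
  have "le ((T ^^ Suc i) u) ((T ^^ i) u)"
    using funpow_unit_antimono[OF assms(2-4), of i "Suc i"] le_SucI by blast
  moreover have "le ((T ^^ j) u) ((T ^^ Suc i) u)"
    using funpow_unit_antimono[OF assms(2-4) Suc_leI[OF \<open>i < j\<close>]] .
  then have "le ((T ^^ i) u) ((T ^^ Suc i) u)"
    using \<open>T ^^ i = T ^^ j\<close> by simp
  ultimately show ?thesis
    using effect_le_antisym[OF \<open>pointed_cone le\<close>] funpow_defect_eq[OF \<open>linear T\<close>] by simp
qed

end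

theorem theorem4p1:
  fixes le :: "'a::real_vector \<Rightarrow> 'a \<Rightarrow> bool" and u :: 'a
    and A :: "('a \<Rightarrow> 'a) set"
  assumes "ordered_effect_space le u"
    and "pointed_cone le"
    and "finite A"
    and "\<And>T. T \<in> A \<Longrightarrow> linear T \<and> positive_map le T \<and> subunital le u T"
    and "\<And>S T. S \<in> A \<Longrightarrow> T \<in> A \<Longrightarrow> S \<circ> T \<in> A"
  shows "\<forall>T\<in>A. \<exists>n::nat. 1 \<le> n \<and> n \<le> card A \<and> (T ^^ n) (defect u T) = 0"
proof
  fix T assume "T \<in> A"
  then obtain i j where ij: "1 \<le> i" "i < j" "j \<le> card A + 1" "T ^^ i = T ^^ j"
    using funpow_repeats_in_finite_compose_closed assms(3,5) by metis
  have "(T ^^ i) (defect u T) = 0"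
    using funpow_defect_eq_0_if_funpow_eq[OF assms(1,2)] assms(4)[OF \<open>T \<in> A\<close>] ij(2,4)
    by blast
  with ij show "\<exists>n. 1 \<le> n \<and> n \<le> card A \<and> (T ^^ n) (defect u T) = 0"
    by auto
qed

end
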